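(* Let $\mathcal A=\mathcal A_0\oplus\mathcal A_1$ be a GDN superalgebra generated by $X=X_0\cup X_1$ with $X_0\subseteq\mathcal A_0$, $X_1\subseteq\mathcal A_1$. Then for every integer $q\ge1$, $$[\mathcal A_0,\underbrace{\mathcal A_1,\dots,\mathcal A_1}_{q}]_L\subseteq\sum_{\substack{2t+m+p=q\\ t,m\ge0,\ p\in\{1,2\}}}[\mathcal A_0,\underbrace{\mathcal A_0,\dots,\mathcal A_0}_{t},\underbrace{kX_1,\dots,kX_1}_{m},\underbrace{\mathcal A_1,\dots,\mathcal A_1}_{p}]_L,$$ where $kX_1$ is the linear span of $X_1$.
   Context: A GDN superalgebra is a superalgebra $\mathcal A=\mathcal A_0\oplus\mathcal A_1$ over a field $k$ (product $\circ$, $\mathcal A_i\circ\mathcal A_j\subseteq\mathcal A_{i+j}$ mod 2, $|x|=i$ for nonzero $x\in\mathcal A_i$) satisfying for homogeneous $x,y,z$: $x\circ(y\circ z)-(x\circ y)\circ z=(-1)^{|x||y|}(y\circ(x\circ z)-(y\circ x)\circ z)$ and $(x\circ y)\circ z=(-1)^{|y||z|}(x\circ z)\circ y$. For subspaces $\mathcal V_i$, $[\mathcal V_1,\dots,\mathcal V_n]_L$ denotes the span of all $((\cdots((x_1\circ x_2)\circ x_3)\cdots)\circ x_n)$ with $x_i\in\mathcal V_i$. *)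

theory Defs
  imports Main "HOL.Vector_Spaces"
begin

definition grc :: "'a set \<Rightarrow> 'a set \<Rightarrow> nat \<Rightarrow> 'a set" where
  "grc A0 A1 i = (if even i then A0 else A1)"

definition superalgebra ::
  "('k::field \<Rightarrow> 'a::ab_group_add \<Rightarrow> 'a) \<Rightarrow> ('a \<Rightarrow> 'a \<Rightarrow> 'a) \<Rightarrow> 'a set \<Rightarrow> 'a set \<Rightarrow> bool" where
  "superalgebra scale mult A0 A1 \<longleftrightarrow>
     vector_space scale \<and>
     module.subspace scale A0 \<and> module.subspace scale A1 \<and>
     A0 \<inter> A1 = {0} \<and> (\<forall>v. \<exists>a0\<in>A0. \<exists>a1\<in>A1. v = a0 + a1) \<and>
     (\<forall>x y z. mult (x + y) z = mult x z + mult y z) \<and>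
     (\<forall>x y z. mult x (y + z) = mult x y + mult x z) \<and>
     (\<forall>c x y. mult (scale c x) y = scale c (mult x y)) \<and>
     (\<forall>c x y. mult x (scale c y) = scale c (mult x y)) \<and>
     (\<forall>i\<in>{0,1}. \<forall>j\<in>{0,1}. \<forall>x\<in>grc A0 A1 i. \<forall>y\<in>grc A0 A1 j. mult x y \<in> grc A0 A1 (i + j))"

definition sgn_deg :: "nat \<Rightarrow> nat \<Rightarrow> 'a::ab_group_add \<Rightarrow> 'a" where
  "sgn_deg i j v = (if odd (i * j) then - v else v)"

definition gdn_superalgebra ::
  "('k::field \<Rightarrow> 'a::ab_group_add \<Rightarrow> 'a) \<Rightarrow> ('a \<Rightarrow> 'a \<Rightarrow> 'a) \<Rightarrow> 'a set \<Rightarrow> 'a set \<Rightarrow> bool" where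
  "gdn_superalgebra scale mult A0 A1 \<longleftrightarrow>
     superalgebra scale mult A0 A1 \<and>
     (\<forall>i\<in>{0,1}. \<forall>j\<in>{0,1}. \<forall>l\<in>{0,1}.
        \<forall>x\<in>grc A0 A1 i. \<forall>y\<in>grc A0 A1 j. \<forall>z\<in>grc A0 A1 l.
          mult x (mult y z) - mult (mult x y) z
            = sgn_deg i j (mult y (mult x z) - mult (mult y x) z) \<and>
          mult (mult x y) z = sgn_deg j l (mult (mult x z) y))"

definition generated_subalgebra ::
  "('k::field \<Rightarrow> 'a::ab_group_add \<Rightarrow> 'a) \<Rightarrow> ('a \<Rightarrow> 'a \<Rightarrow> 'a) \<Rightarrow> 'a set \<Rightarrow> 'a set" where
  "generated_subalgebra scale mult X =
     \<Inter>{S. X \<subseteq> S \<and> module.subspace scale S \<and> (\<forall>x\<in>S. \<forall>y\<in>S. mult x y \<in> S)}"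

definition lnorm :: "('a \<Rightarrow> 'a \<Rightarrow> 'a) \<Rightarrow> 'a list \<Rightarrow> 'a" where
  "lnorm mult xs = foldl mult (hd xs) (tl xs)"

definition lbracket ::
  "('k::field \<Rightarrow> 'a::ab_group_add \<Rightarrow> 'a) \<Rightarrow> ('a \<Rightarrow> 'a \<Rightarrow> 'a) \<Rightarrow> 'a set list \<Rightarrow> 'a set" where
  "lbracket scale mult Vs =
     module.span scale {lnorm mult xs | xs. length xs = length Vs \<and> (\<forall>i<length Vs. xs ! i \<in> Vs ! i)}"

end

theory Submission
  imports Defs "HOL-Library.Multiset"
begin

text \<open>Right multiplications are linear, and the right-commutativity identity
  \<open>(x y) z = \<plusminus>(x z) y\<close> lets one permute the factors of a left-normed product of homogeneous
  elements freely, up to sign. The key fact is that \<open>(x b) y \<in> [A\<^sub>0, A\<^sub>0]\<^sub>L + [A\<^sub>0, kX\<^sub>1, A\<^sub>1]\<^sub>L\<close>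
  for \<open>x \<in> A\<^sub>0\<close> and \<open>b, y \<in> A\<^sub>1\<close>: the odd elements \<open>b\<close> with this property form a subspace
  containing \<open>X\<^sub>1\<close> and closed under products with \<open>A\<^sub>0\<close> on both sides, so together with \<open>A\<^sub>0\<close>
  they span a subalgebra containing the generators, which is everything. Appending one more odd
  factor to a bracket \<open>[A\<^sub>0, A\<^sub>0\<^sup>t, kX\<^sub>1\<^sup>m, A\<^sub>1\<^sup>p]\<^sub>L\<close> either raises \<open>p\<close> from 1 to 2, or produces
  three trailing odd factors; moving two of them next to the head and applying the key fact
  trades them for one even factor or for a factor from \<open>kX\<^sub>1\<close>, which gives induction on \<open>q\<close>.\<close>

lemma list_all2_replicate_right:
  "list_all2 P xs (replicate n a) \<longleftrightarrow> length xs = n \<and> (\<forall>x\<in>set xs. P x a)"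
  by (auto simp: list_all2_conv_all_nth dest: in_set_conv_nth[THEN iffD1])

lemma list_all2_mem_Cons_replicate_appendE:
  assumes "list_all2 (\<lambda>x V. x \<in> V) xs (V # replicate t U @ replicate m W @ replicate p Z)"
  obtains y cs gs bs where "xs = y # cs @ gs @ bs" "y \<in> V"
    "length cs = t" "set cs \<subseteq> U" "length gs = m" "set gs \<subseteq> W" "length bs = p" "set bs \<subseteq> Z"
  using assms
  by (auto simp: list_all2_Cons2 list_all2_append2 list_all2_replicate_right subset_code(1))

lemma lnorm_Cons [simp]: "lnorm f (x # xs) = foldl f x xs"
  by (simp add: lnorm_def)

locale gdn =
  fixes scale :: "'k::field \<Rightarrow> 'a::ab_group_add \<Rightarrow> 'a"
    and mult :: "'a \<Rightarrow> 'a \<Rightarrow> 'a"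
    and A0 A1 :: "'a set"
  assumes gdn: "gdn_superalgebra scale mult A0 A1"
begin

sublocale vector_space scale
  using gdn by (simp add: gdn_superalgebra_def superalgebra_def)

sublocale vector_space_pair scale scale ..

lemma subspace_A0: "subspace A0" and subspace_A1: "subspace A1" and A0_Int_A1: "A0 \<inter> A1 = {0}"
  using gdn by (simp_all add: gdn_superalgebra_def superalgebra_def)

lemma mult_add_left: "mult (x + y) z = mult x z + mult y z"
  and mult_add_right: "mult x (y + z) = mult x y + mult x z"
  and mult_scale_left: "mult (scale c x) y = scale c (mult x y)"
  and mult_scale_right: "mult x (scale c y) = scale c (mult x y)"
  using gdn by (simp_all add: gdn_superalgebra_def superalgebra_def)

lemma linear_mult_right: "Vector_Spaces.linear scale scale (\<lambda>u. mult u c)"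
  and linear_mult_left: "Vector_Spaces.linear scale scale (mult c)"
  by (simp_all add: linear_iff vector_space_axioms mult_add_left mult_add_right
      mult_scale_left mult_scale_right)

lemma mult_zero_left [simp]: "mult 0 y = 0"
  and mult_zero_right [simp]: "mult x 0 = 0"
  and mult_minus_left [simp]: "mult (- x) y = - mult x y"
  using linear_0[OF linear_mult_right[of y]] linear_0[OF linear_mult_left[of x]]
    linear_neg[OF linear_mult_right[of y]] by simp_all

lemma linear_foldl_mult: "Vector_Spaces.linear scale scale (\<lambda>u. foldl mult u zs)"
proof (induction zs)
  case Nil
  show ?case by (simp add: linear_id[unfolded id_def])
next
  case (Cons z zs)
  show ?case
    using Vector_Spaces.linear_compose[OF linear_mult_right[of z] Cons.IH] by (simp add: o_def)
qed

lemma linear_mem_of_span: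
  assumes "Vector_Spaces.linear scale scale f" "subspace W" "\<And>s. s \<in> S \<Longrightarrow> f s \<in> W" "v \<in> span S"
  shows "f v \<in> W"
proof -
  have "span S \<subseteq> f -` W"
    using assms(3) by (intro span_minimal linear_subspace_vimage[OF assms(1,2)]) auto
  then show ?thesis using assms(4) by auto
qed

lemma linear_mem_of_lbracket:
  assumes "Vector_Spaces.linear scale scale f" "subspace W"
    and "\<And>xs. list_all2 (\<lambda>x V. x \<in> V) xs Vs \<Longrightarrow> f (lnorm mult xs) \<in> W"
    and "v \<in> lbracket scale mult Vs"
  shows "f v \<in> W"
proof (rule linear_mem_of_span[OF assms(1,2) _ assms(4)[unfolded lbracket_def]])
  fix s assume "s \<in> {lnorm mult xs |xs. length xs = length Vs \<and> (\<forall>i<length Vs. xs ! i \<in> Vs ! i)}"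
  then show "f s \<in> W" using assms(3) by (auto simp: list_all2_conv_all_nth)
qed

lemma lnorm_mem_lbracket:
  assumes "list_all2 (\<lambda>x V. x \<in> V) xs Vs"
  shows "lnorm mult xs \<in> lbracket scale mult Vs"
proof -
  have "length xs = length Vs \<and> (\<forall>i<length Vs. xs ! i \<in> Vs ! i)"
    using assms by (simp add: list_all2_conv_all_nth)
  then show ?thesis unfolding lbracket_def by (intro span_base) blast
qed

lemma mult_homogeneous:
  "i \<in> {0,1} \<Longrightarrow> j \<in> {0,1} \<Longrightarrow> x \<in> grc A0 A1 i \<Longrightarrow> y \<in> grc A0 A1 j
   \<Longrightarrow> mult x y \<in> grc A0 A1 (i + j)"
  using gdn unfolding gdn_superalgebra_def superalgebra_def by blast

lemma mult_even_even: "x \<in> A0 \<Longrightarrow> y \<in> A0 \<Longrightarrow> mult x y \<in> A0"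
  and mult_even_odd: "x \<in> A0 \<Longrightarrow> y \<in> A1 \<Longrightarrow> mult x y \<in> A1"
  and mult_odd_even: "x \<in> A1 \<Longrightarrow> y \<in> A0 \<Longrightarrow> mult x y \<in> A1"
  and mult_odd_odd: "x \<in> A1 \<Longrightarrow> y \<in> A1 \<Longrightarrow> mult x y \<in> A0"
  using mult_homogeneous[of 0 0 x y] mult_homogeneous[of 0 1 x y]
    mult_homogeneous[of 1 0 x y] mult_homogeneous[of 1 1 x y]
  by (simp_all add: grc_def)

lemma mult_homogeneous_closed: "x \<in> A0 \<union> A1 \<Longrightarrow> y \<in> A0 \<union> A1 \<Longrightarrow> mult x y \<in> A0 \<union> A1"
  using mult_even_even mult_even_odd mult_odd_even mult_odd_odd by blast

lemma gdn_identities: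
  "i \<in> {0,1} \<Longrightarrow> j \<in> {0,1} \<Longrightarrow> l \<in> {0,1} \<Longrightarrow>
   x \<in> grc A0 A1 i \<Longrightarrow> y \<in> grc A0 A1 j \<Longrightarrow> z \<in> grc A0 A1 l \<Longrightarrow>
     mult x (mult y z) - mult (mult x y) z = sgn_deg i j (mult y (mult x z) - mult (mult y x) z) \<and>
     mult (mult x y) z = sgn_deg j l (mult (mult x z) y)"
  using gdn unfolding gdn_superalgebra_def by blast

lemma homogeneous_degree: "x \<in> A0 \<union> A1 \<Longrightarrow> \<exists>i\<in>{0,1::nat}. x \<in> grc A0 A1 i"
  unfolding grc_def by (metis UnE even_zero insertI1 insertI2 odd_one)

lemma left_symmetric_even_odd_odd:
  assumes "x \<in> A0" "y \<in> A1" "z \<in> A1"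
  shows "mult x (mult y z) - mult (mult x y) z = mult y (mult x z) - mult (mult y x) z"
  using conjunct1[OF gdn_identities[of 0 1 1 x y z]] assms by (simp add: grc_def sgn_deg_def)

lemma right_commute_odd_even_odd:
  assumes "x \<in> A1" "y \<in> A0" "z \<in> A1"
  shows "mult (mult x y) z = mult (mult x z) y"
  using conjunct2[OF gdn_identities[of 1 0 1 x y z]] assms by (simp add: grc_def sgn_deg_def)

lemma right_commute_up_to_sign:
  assumes "x \<in> A0 \<union> A1" "y \<in> A0 \<union> A1" "z \<in> A0 \<union> A1"
  shows "mult (mult x y) z \<in> {mult (mult x z) y, - mult (mult x z) y}"
proof -
  obtain i j l where "i \<in> {0,1::nat}" "j \<in> {0,1::nat}" "l \<in> {0,1::nat}"
    "x \<in> grc A0 A1 i" "y \<in> grc A0 A1 j" "z \<in> grc A0 A1 l"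
    using homogeneous_degree assms by meson
  from conjunct2[OF gdn_identities[OF this]] show ?thesis
    unfolding sgn_deg_def by auto
qed

lemma foldl_mult_homogeneous: "x \<in> A0 \<union> A1 \<Longrightarrow> set zs \<subseteq> A0 \<union> A1 \<Longrightarrow> foldl mult x zs \<in> A0 \<union> A1"
proof (induction zs arbitrary: x)
  case (Cons z zs)
  then show ?case using Cons.IH[OF mult_homogeneous_closed[of x z]] by simp
qed simp

lemma up_to_sign_trans:
  fixes a b c :: "'b::ab_group_add"
  shows "a \<in> {b, - b} \<Longrightarrow> b \<in> {c, - c} \<Longrightarrow> a \<in> {c, - c}"
  by auto

lemma foldl_snoc_up_to_sign:
  assumes "x \<in> A0 \<union> A1" "set bs \<subseteq> A0 \<union> A1" "b \<in> A0 \<union> A1"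
  shows "foldl mult x (bs @ [b]) \<in> {foldl mult x (b # bs), - foldl mult x (b # bs)}"
  using assms(2)
proof (induction bs rule: rev_induct)
  case Nil
  then show ?case by simp
next
  case (snoc z bs)
  let ?w = "foldl mult x bs"
  have "mult (mult ?w z) b \<in> {mult (mult ?w b) z, - mult (mult ?w b) z}"
    using snoc.prems assms by (intro right_commute_up_to_sign foldl_mult_homogeneous) auto
  moreover have "mult (mult ?w b) z \<in> {foldl mult x (b # bs @ [z]), - foldl mult x (b # bs @ [z])}"
    using snoc by auto
  ultimately have "mult (mult ?w z) b \<in> {foldl mult x (b # bs @ [z]), - foldl mult x (b # bs @ [z])}"
    by (rule up_to_sign_trans)
  then show ?case by simp
qed

lemma foldl_perm_up_to_sign:
  assumes "mset xs = mset ys" "x \<in> A0 \<union> A1" "set xs \<subseteq> A0 \<union> A1"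
  shows "foldl mult x xs \<in> {foldl mult x ys, - foldl mult x ys}"
  using assms
proof (induction xs arbitrary: ys rule: rev_induct)
  case Nil
  then show ?case by simp
next
  case (snoc b xs)
  have "b \<in> set ys" using snoc.prems(1) by (metis mset_eq_setD in_set_conv_decomp)
  then obtain as bs where ys: "ys = as @ b # bs" by (meson split_list)
  have perm: "mset xs = mset (as @ bs)" using snoc.prems(1) ys by simp
  then have "set (as @ bs) \<subseteq> A0 \<union> A1" using snoc.prems by (metis mset_eq_setD le_sup_iff set_append)
  have "mult (foldl mult x xs) b \<in> {mult (foldl mult x (as @ bs)) b, - mult (foldl mult x (as @ bs)) b}"
    using snoc.IH[OF perm] snoc.prems by auto
  moreover have "mult (foldl mult x (as @ bs)) b \<in> {foldl mult x ys, - foldl mult x ys}"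
    using foldl_snoc_up_to_sign[of "foldl mult x as" bs b] foldl_mult_homogeneous[of x as]
      \<open>set (as @ bs) \<subseteq> A0 \<union> A1\<close> snoc.prems ys by simp
  ultimately have "mult (foldl mult x xs) b \<in> {foldl mult x ys, - foldl mult x ys}"
    by (rule up_to_sign_trans)
  then show ?case by simp
qed

lemma foldl_perm_mem:
  assumes "mset xs = mset ys" "x \<in> A0 \<union> A1" "set xs \<subseteq> A0 \<union> A1"
    and "subspace W" "foldl mult x ys \<in> W"
  shows "foldl mult x xs \<in> W"
  using foldl_perm_up_to_sign[OF assms(1-3)] assms(4,5) subspace_neg by auto

lemma mult_mult_even_odd_odd:
  assumes "x \<in> A0" "b \<in> A1" "y \<in> A1"
  shows "mult (mult x b) y = mult x (mult b y) - mult b (mult x y) + mult (mult b y) x"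
proof -
  have e: "mult b (mult x y) - mult (mult b y) x = mult x (mult b y) - mult (mult x b) y"
    using left_symmetric_even_odd_odd[OF assms] right_commute_odd_even_odd[of b x y] assms
    by simp
  have "mult (mult x b) y = mult x (mult b y) - (mult b (mult x y) - mult (mult b y) x)"
    by (simp add: e)
  then show ?thesis by (simp only: diff_diff_eq2 diff_add_eq)
qed

end

locale gdn_generated = gdn scale mult A0 A1
  for scale :: "'k::field \<Rightarrow> 'a::ab_group_add \<Rightarrow> 'a" and mult A0 A1 +
  fixes X0 X1 :: "'a set"
  assumes X0_subset_A0: "X0 \<subseteq> A0" and X1_subset_A1: "X1 \<subseteq> A1"
    and generates: "generated_subalgebra scale mult (X0 \<union> X1) = UNIV"
begin

lemma span_X1_subset_A1: "span X1 \<subseteq> A1"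
  by (rule span_minimal[OF X1_subset_A1 subspace_A1])

lemma A1_subset_of_invariant:
  assumes B: "subspace B" "B \<subseteq> A1" "X1 \<subseteq> B"
    and left: "\<And>a b. a \<in> A0 \<Longrightarrow> b \<in> B \<Longrightarrow> mult a b \<in> B"
    and right: "\<And>a b. b \<in> B \<Longrightarrow> a \<in> A0 \<Longrightarrow> mult b a \<in> B"
  shows "A1 \<subseteq> B"
proof
  fix b assume b: "b \<in> A1"
  define U where "U = {a + s | a s. a \<in> A0 \<and> s \<in> B}"
  have U_span: "U = span (A0 \<union> B)"
    unfolding U_def span_Un span_eq_iff[THEN iffD2, OF subspace_A0] span_eq_iff[THEN iffD2, OF B(1)] ..
  have "mult x y \<in> U" if "x \<in> U" "y \<in> U" for x y
  proof -
    obtain a s a' s' where xy: "x = a + s" "y = a' + s'"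
      and in_A0: "a \<in> A0" "a' \<in> A0" and in_B: "s \<in> B" "s' \<in> B"
      using \<open>x \<in> U\<close> \<open>y \<in> U\<close> unfolding U_def by blast
    have "mult x y = (mult a a' + mult s s') + (mult a s' + mult s a')"
      unfolding xy by (simp add: mult_add_left mult_add_right algebra_simps)
    moreover have "mult a a' + mult s s' \<in> A0"
      using in_A0 in_B B(2) by (intro subspace_add[OF subspace_A0] mult_even_even mult_odd_odd) auto
    moreover have "mult a s' + mult s a' \<in> B"
      using in_A0 in_B by (intro subspace_add[OF B(1)] left right)
    ultimately show ?thesis unfolding U_def by blast
  qed
  moreover have "X0 \<union> X1 \<subseteq> U"
    unfolding U_span using X0_subset_A0 B(3) span_superset[of "A0 \<union> B"] by blast
  ultimately have "UNIV \<subseteq> U"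
    using generates U_span unfolding generated_subalgebra_def by blast
  then obtain a s where "b = a + s" "a \<in> A0" "s \<in> B" unfolding U_def by blast
  moreover have "b - s \<in> A1"
    using b \<open>s \<in> B\<close> B(2) by (intro subspace_diff[OF subspace_A1]) auto
  ultimately have "a = 0" using A0_Int_A1 by (metis IntI add_diff_cancel_right' singletonD)
  then show "b \<in> B" using \<open>b = a + s\<close> \<open>s \<in> B\<close> by simp
qed

definition reduct :: "'a set" where
  "reduct = span ({mult x c | x c. x \<in> A0 \<and> c \<in> A0}
     \<union> {mult (mult x g) y | x g y. x \<in> A0 \<and> g \<in> span X1 \<and> y \<in> A1})"

lemma subspace_reduct: "subspace reduct"
  unfolding reduct_def by simp

lemma mult_even_even_mem_reduct: "x \<in> A0 \<Longrightarrow> c \<in> A0 \<Longrightarrow> mult x c \<in> reduct"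
  unfolding reduct_def by (rule span_base) blast

lemma mult_mult_span_X1_mem_reduct:
  "x \<in> A0 \<Longrightarrow> g \<in> span X1 \<Longrightarrow> y \<in> A1 \<Longrightarrow> mult (mult x g) y \<in> reduct"
  unfolding reduct_def by (rule span_base) blast

lemma mult_mult_mem_reduct_of_right_products:
  assumes "x \<in> A0" "b \<in> A1" "y \<in> A1" "\<And>w. w \<in> A1 \<Longrightarrow> mult b w \<in> reduct"
  shows "mult (mult x b) y \<in> reduct"
proof -
  have "mult b y \<in> A0" using assms(2,3) by (rule mult_odd_odd)
  then have "mult x (mult b y) \<in> reduct" "mult (mult b y) x \<in> reduct"
    using assms(1) by (simp_all add: mult_even_even_mem_reduct)
  moreover have "mult b (mult x y) \<in> reduct"
    using assms by (simp add: mult_even_odd)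
  ultimately have "mult x (mult b y) - mult b (mult x y) + mult (mult b y) x \<in> reduct"
    by (intro subspace_add[OF subspace_reduct] subspace_diff[OF subspace_reduct])
  then show ?thesis using mult_mult_even_odd_odd[OF assms(1-3)] by simp
qed

lemma mult_mult_even_odd_odd_mem_reduct:
  assumes "x \<in> A0" "b \<in> A1" "y \<in> A1"
  shows "mult (mult x b) y \<in> reduct"
proof -
  define B where "B = {b \<in> A1. \<forall>x\<in>A0. \<forall>y\<in>A1. mult (mult x b) y \<in> reduct}"
  have "subspace B"
    unfolding B_def
  proof (rule subspaceI)
    show "0 \<in> {b \<in> A1. \<forall>x\<in>A0. \<forall>y\<in>A1. mult (mult x b) y \<in> reduct}"
      using subspace_0[OF subspace_A1] subspace_0[OF subspace_reduct] by simp
  qed (auto simp: mult_add_left mult_add_right mult_scale_left mult_scale_right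
      intro!: subspace_add[OF subspace_A1] subspace_add[OF subspace_reduct]
        subspace_scale[OF subspace_A1] subspace_scale[OF subspace_reduct])
  moreover have "B \<subseteq> A1" unfolding B_def by blast
  moreover have "X1 \<subseteq> B"
    unfolding B_def using X1_subset_A1 span_base[of _ X1] mult_mult_span_X1_mem_reduct by blast
  moreover have "mult a b \<in> B" if "a \<in> A0" "b \<in> B" for a b
    using that mult_even_odd mult_mult_mem_reduct_of_right_products unfolding B_def by auto
  moreover have "mult b a \<in> B" if "b \<in> B" "a \<in> A0" for a b
    using that mult_odd_even mult_odd_odd right_commute_odd_even_odd mult_even_even_mem_reduct
      mult_mult_mem_reduct_of_right_products unfolding B_def by auto
  ultimately have "A1 \<subseteq> B" by (rule A1_subset_of_invariant)
  then show ?thesis using assms unfolding B_def by blast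
qed

definition standard_brackets :: "nat \<Rightarrow> 'a set" where
  "standard_brackets q = span (\<Union>{lbracket scale mult
      (A0 # replicate t A0 @ replicate m (span X1) @ replicate p A1)
        | t m p :: nat. 2 * t + m + p = q \<and> p \<in> {1, 2}})"

lemma subspace_standard_brackets: "subspace (standard_brackets q)"
  unfolding standard_brackets_def by simp

lemma foldl_mem_standard_brackets:
  assumes "x \<in> A0" "set cs \<subseteq> A0" "set gs \<subseteq> span X1" "set bs \<subseteq> A1" "length bs \<in> {1, 2}"
    and "2 * length cs + length gs + length bs = q"
  shows "foldl mult x (cs @ gs @ bs) \<in> standard_brackets q"
proof -
  let ?Vs = "A0 # replicate (length cs) A0 @ replicate (length gs) (span X1)
    @ replicate (length bs) A1"
  have "list_all2 (\<lambda>x V. x \<in> V) (x # cs @ gs @ bs) ?Vs"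
    using assms(1-4)
    by (intro list_all2_Cons[THEN iffD2] conjI list_all2_appendI)
      (auto simp: list_all2_replicate_right)
  then have "foldl mult x (cs @ gs @ bs) \<in> lbracket scale mult ?Vs"
    using lnorm_mem_lbracket by (metis lnorm_Cons)
  moreover have "lbracket scale mult ?Vs \<in> {lbracket scale mult
      (A0 # replicate t A0 @ replicate m (span X1) @ replicate p A1)
        | t m p :: nat. 2 * t + m + p = q \<and> p \<in> {1, 2}}"
    using assms(5,6) by (intro CollectI exI[of _ "length cs"] exI[of _ "length gs"] exI[of _ "length bs"]) simp
  ultimately show ?thesis unfolding standard_brackets_def by (intro span_base UnionI)
qed

lemma foldl_three_odd_mem_standard_brackets:
  assumes y: "y \<in> A0" and cs: "set cs \<subseteq> A0" and gs: "set gs \<subseteq> span X1"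
    and odd: "b \<in> A1" "b' \<in> A1" "c \<in> A1"
  shows "foldl mult y (cs @ gs @ [b, b', c]) \<in> standard_brackets (2 * length cs + length gs + 3)"
    (is "_ \<in> ?W")
proof -
  let ?zs = "cs @ gs"
  have zs: "set ?zs \<subseteq> A0 \<union> A1" using cs gs span_X1_subset_A1 by auto
  have "foldl mult (mult (mult y b) b') (c # ?zs) \<in> ?W"
  proof (rule linear_mem_of_span[OF linear_foldl_mult subspace_standard_brackets])
    show "mult (mult y b) b' \<in> span ({mult x d | x d. x \<in> A0 \<and> d \<in> A0}
        \<union> {mult (mult x g) e | x g e. x \<in> A0 \<and> g \<in> span X1 \<and> e \<in> A1})"
      using mult_mult_even_odd_odd_mem_reduct[OF y odd(1,2)] unfolding reduct_def .
  next
    fix s assume "s \<in> {mult x d | x d. x \<in> A0 \<and> d \<in> A0}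
        \<union> {mult (mult x g) e | x g e. x \<in> A0 \<and> g \<in> span X1 \<and> e \<in> A1}"
    then show "foldl mult s (c # ?zs) \<in> ?W"
    proof (elim UnE CollectE exE conjE)
      fix x d assume s: "s = mult x d" and x: "x \<in> A0" and d: "d \<in> A0"
      have sorted: "foldl mult x ((d # cs) @ gs @ [c]) \<in> ?W"
        using x d cs gs odd(3) by (intro foldl_mem_standard_brackets) auto
      have "foldl mult x (d # c # ?zs) \<in> ?W"
        by (rule foldl_perm_mem[OF _ _ _ subspace_standard_brackets sorted]) (use x d odd(3) zs in auto)
      then show ?thesis using s by simp
    next
      fix x g e assume s: "s = mult (mult x g) e" and x: "x \<in> A0"
        and g: "g \<in> span X1" and e: "e \<in> A1"
      have sorted: "foldl mult x (cs @ (g # gs) @ [e, c]) \<in> ?W"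
        using x g e cs gs odd(3) by (intro foldl_mem_standard_brackets) auto
      have "foldl mult x (g # e # c # ?zs) \<in> ?W"
        by (rule foldl_perm_mem[OF _ _ _ subspace_standard_brackets sorted])
          (use x g e odd(3) zs span_X1_subset_A1 in auto)
      then show ?thesis using s by simp
    qed
  qed
  then have sorted: "foldl mult y ([b, b', c] @ ?zs) \<in> ?W" by simp
  show ?thesis
    by (rule foldl_perm_mem[OF _ _ _ subspace_standard_brackets sorted]) (use y odd zs in auto)
qed

lemma foldl_append_odd_mem_standard_brackets:
  assumes y: "y \<in> A0" and cs: "set cs \<subseteq> A0" and gs: "set gs \<subseteq> span X1"
    and bs: "set bs \<subseteq> A1" "length bs \<in> {1, 2}" and c: "c \<in> A1"
  shows "foldl mult y (cs @ gs @ bs @ [c])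
    \<in> standard_brackets (Suc (2 * length cs + length gs + length bs))"
proof (cases "length bs = 1")
  case True
  then show ?thesis using assms by (intro foldl_mem_standard_brackets) auto
next
  case False
  with bs obtain b b' where "bs = [b, b']"
    by (metis insertE singletonD length_0_conv length_Suc_conv numeral_2_eq_2)
  then show ?thesis
    using foldl_three_odd_mem_standard_brackets[OF y cs gs, of b b' c] bs c
    by (simp add: numeral_3_eq_3)
qed

lemma mult_odd_mem_standard_brackets:
  assumes "s \<in> standard_brackets q" "c \<in> A1"
  shows "mult s c \<in> standard_brackets (Suc q)"
proof (rule linear_mem_of_span[OF linear_mult_right subspace_standard_brackets])
  show "s \<in> span (\<Union>{lbracket scale mult (A0 # replicate t A0 @ replicate m (span X1) @ replicate p A1)
        | t m p :: nat. 2 * t + m + p = q \<and> p \<in> {1, 2}})"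
    using assms(1) unfolding standard_brackets_def .
next
  fix v assume "v \<in> \<Union>{lbracket scale mult (A0 # replicate t A0 @ replicate m (span X1) @ replicate p A1)
        | t m p :: nat. 2 * t + m + p = q \<and> p \<in> {1, 2}}"
  then obtain t m p where tmp: "2 * t + m + p = q" "p \<in> {1, 2}"
    and v: "v \<in> lbracket scale mult (A0 # replicate t A0 @ replicate m (span X1) @ replicate p A1)"
    by blast
  show "mult v c \<in> standard_brackets (Suc q)"
  proof (rule linear_mem_of_lbracket[OF linear_mult_right subspace_standard_brackets _ v])
    fix xs
    assume "list_all2 (\<lambda>x V. x \<in> V) xs (A0 # replicate t A0 @ replicate m (span X1) @ replicate p A1)"
    then obtain y cs gs bs where xs: "xs = y # cs @ gs @ bs" and y: "y \<in> A0"
      and cs: "length cs = t" "set cs \<subseteq> A0" and gs: "length gs = m" "set gs \<subseteq> span X1"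
      and bs: "length bs = p" "set bs \<subseteq> A1"
      by (rule list_all2_mem_Cons_replicate_appendE)
    then show "mult (lnorm mult xs) c \<in> standard_brackets (Suc q)"
      using foldl_append_odd_mem_standard_brackets[OF y cs(2) gs(2) bs(2) _ assms(2)] tmp by simp
  qed
qed

lemma foldl_odd_mem_standard_brackets:
  assumes "x \<in> A0" "bs \<noteq> []" "set bs \<subseteq> A1"
  shows "foldl mult x bs \<in> standard_brackets (length bs)"
  using assms(2,3)
proof (induction bs rule: rev_induct)
  case (snoc c bs)
  show ?case
  proof (cases "bs = []")
    case True
    then show ?thesis
      using foldl_mem_standard_brackets[of x "[]" "[]" "[c]"] assms(1) snoc.prems by simp
  next
    case False
    then show ?thesis using snoc by (simp add: mult_odd_mem_standard_brackets)
  qed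
qed simp

lemma lbracket_even_odds_subset_standard_brackets:
  assumes "q \<ge> 1"
  shows "lbracket scale mult (A0 # replicate q A1) \<subseteq> standard_brackets q"
proof
  fix v assume v: "v \<in> lbracket scale mult (A0 # replicate q A1)"
  show "v \<in> standard_brackets q"
  proof (rule linear_mem_of_lbracket[OF linear_id[unfolded id_def] subspace_standard_brackets _ v])
    fix xs assume "list_all2 (\<lambda>x V. x \<in> V) xs (A0 # replicate q A1)"
    then obtain y bs where xs: "xs = y # bs" and y: "y \<in> A0"
      and bs: "list_all2 (\<lambda>x V. x \<in> V) bs (replicate q A1)"
      unfolding list_all2_Cons2 by blast
    from bs have length_bs: "length bs = q" and odd: "set bs \<subseteq> A1"
      by (auto simp: list_all2_replicate_right)
    have "bs \<noteq> []" using length_bs assms by auto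
    from foldl_odd_mem_standard_brackets[OF y this odd]
    show "lnorm mult xs \<in> standard_brackets q" using xs length_bs by simp
  qed
qed

end

theorem lemma4p3:
  fixes scale :: "'k::field \<Rightarrow> 'a::ab_group_add \<Rightarrow> 'a"
    and mult :: "'a \<Rightarrow> 'a \<Rightarrow> 'a"
    and A0 A1 X0 X1 :: "'a set"
    and q :: nat
  assumes "gdn_superalgebra scale mult A0 A1"
    and "X0 \<subseteq> A0" and "X1 \<subseteq> A1"
    and "generated_subalgebra scale mult (X0 \<union> X1) = UNIV"
    and "q \<ge> 1"
  shows "lbracket scale mult (A0 # replicate q A1)
     \<subseteq> module.span scale
          (\<Union>{lbracket scale mult (A0 # replicate t A0 @ replicate m (module.span scale X1) @ replicate p A1)
              | t m p :: nat. 2 * t + m + p = q \<and> p \<in> {1, 2}})"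
proof -
  interpret gdn_generated scale mult A0 A1 X0 X1
    using assms(1-4) by unfold_locales
  show ?thesis
    using lbracket_even_odds_subset_standard_brackets[OF assms(5)]
    unfolding standard_brackets_def .
qed

end
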